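(* Let $T$ be a compact Hausdorff space, $C(T)$ the ring of real-valued continuous functions on $T$, $\mathcal{I} = [0,1]$, and $n \geq 1$. Let $H : T \times \mathcal{I} \to S^{n-1}$ be continuous, and let $v_0, v_1 \in C(T)^n$ be the unimodular rows whose coordinate functions are the components of $H(\cdot, 0)$ and $H(\cdot, 1)$ respectively. Then there exists $\alpha \in SL_n(C(T))$ which can be connected to the identity matrix and satisfies $\alpha v_0^t = v_1^t$.
   Context: A continuous map $f = (f_1, \ldots, f_n) : T \to S^{n-1}$ gives a unimodular row $(f_1, \ldots, f_n)$ over $C(T)$ (since $\sum f_i^2 = 1$). A matrix $\alpha \in SL_n(C(T))$ "can be connected to the identity" means there is $\beta(X) \in SL_n(C(T)[X])$ with $\beta(0) = I_n$ and $\beta(1) = \alpha$. *)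

theory Defs
  imports "HOL-Analysis.Analysis" "HOL-Library.Function_Algebras"
    "HOL-Computational_Algebra.Polynomial"
begin

text \<open>C(T) is modelled as the functions 't \<Rightarrow> real (pointwise ring
  structure from Function_Algebras) that are continuous on UNIV.\<close>

definition CT_matrix :: "('t::topological_space \<Rightarrow> real)^'n^'n \<Rightarrow> bool" where
  "CT_matrix A \<longleftrightarrow> (\<forall>i j. continuous_on UNIV (A $ i $ j))"

definition SL_CT :: "('t::topological_space \<Rightarrow> real)^'n^'n \<Rightarrow> bool" where
  "SL_CT A \<longleftrightarrow> CT_matrix A \<and> det A = 1"

definition SL_CT_poly :: "(('t::topological_space \<Rightarrow> real) poly)^'n^'n \<Rightarrow> bool" where
  "SL_CT_poly B \<longleftrightarrow> (\<forall>i j k. continuous_on UNIV (coeff (B $ i $ j) k)) \<and> det B = 1"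

definition eval_mat :: "('a::comm_semiring_0 poly)^'n^'n \<Rightarrow> 'a \<Rightarrow> 'a^'n^'n" where
  "eval_mat B x = (\<chi> i j. poly (B $ i $ j) x)"

definition connected_to_identity :: "('t::topological_space \<Rightarrow> real)^'n^'n \<Rightarrow> bool" where
  "connected_to_identity A \<longleftrightarrow>
     (\<exists>B. SL_CT_poly B \<and> eval_mat B 0 = mat 1 \<and> eval_mat B 1 = A)"

end

theory Submission
  imports Defs
begin

text \<open>If two unit vectors u and w are not antipodal, the vector p = (u + w) / (1 + u \<bullet> w)
  satisfies u \<bullet> p = w \<bullet> p = 1, and then the transvections I + (p - u) u^T and I + (w - p) w^T
  carry u to p and p to w. Applied pointwise to continuous unit vector fields this gives an
  element of SL_n(C(T)) moving one field to the other; it is connected to the identity through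
  I + X (p - u) u^T. By compactness of T the homotopy H is uniformly continuous in the
  I-variable, so [0,1] can be subdivided finely enough that consecutive fields H(\<cdot>, k/N) are
  never antipodal, and the theorem follows by composing the resulting matrices.\<close>

lemma det_row_replaced_mat_1:
  fixes y :: "'a::comm_ring_1^'n::finite"
  shows "det (\<chi> i. if i = j then y else axis i 1) = y $ j"
proof -
  have "det (\<chi> i. if i = j then y else axis i 1)
      = det (\<chi> i. if i = j then (\<Sum>k\<in>UNIV. y $ k *s axis k 1) else axis i (1::'a))"
    by (simp only: basis_expansion)
  also have "\<dots> = (\<Sum>k\<in>UNIV. y $ k * det (\<chi> i. if i = j then axis k 1 else axis i (1::'a)))"
    by (simp add: det_linear_row_sum det_row_mul)
  also have "\<dots> = (\<Sum>k\<in>{j}. y $ k * det (\<chi> i. if i = j then axis k 1 else axis i (1::'a)))"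
  proof (rule sum.mono_neutral_right)
    have "det (\<chi> i. if i = j then axis k 1 else axis i (1::'a)) = 0" if "k \<noteq> j" for k
      by (rule det_identical_rows[of j k]) (use that in \<open>auto simp: row_def\<close>)
    then show "\<forall>k\<in>UNIV - {j}. y $ k * det (\<chi> i. if i = j then axis k 1 else axis i (1::'a)) = 0"
      by simp
  qed auto
  also have "\<dots> = y $ j"
  proof -
    have "(\<chi> i. if i = j then axis j 1 else axis i 1) = (mat 1 :: 'a^'n^'n)"
      by (simp add: vec_eq_iff axis_def mat_def)
    then show ?thesis by simp
  qed
  finally show ?thesis .
qed

lemma det_row_replaced_rank_one_rows:
  fixes x y :: "'a::comm_ring_1^'n::finite"
  assumes "finite S" "j \<notin> S"
  shows "det (\<chi> i. if i = j then y else if i \<in> S then axis i 1 + x $ i *s y else axis i 1) = y $ j"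
  using assms
proof (induction S rule: finite_induct)
  case empty
  then show ?case by (simp add: det_row_replaced_mat_1 cong: if_cong)
next
  case (insert s S)
  let ?A = "\<chi> i. if i = j then y else if i \<in> S then axis i 1 + x $ i *s y else axis i 1"
  have "s \<noteq> j" using insert.prems by auto
  have "(\<chi> i. if i = j then y else if i \<in> insert s S then axis i 1 + x $ i *s y else axis i 1)
      = (\<chi> i. if i = s then row s ?A + x $ s *s row j ?A else row i ?A)"
    using insert.hyps(2) \<open>s \<noteq> j\<close> by (auto simp: vec_eq_iff row_def)
  then show ?case
    using det_row_operation[OF \<open>s \<noteq> j\<close>, of ?A "x $ s"] insert by simp
qed

lemma det_rank_one_rows:
  fixes x y :: "'a::comm_ring_1^'n::finite"
  assumes "finite S"
  shows "det (\<chi> i. if i \<in> S then axis i 1 + x $ i *s y else axis i 1) = 1 + (\<Sum>i\<in>S. x $ i * y $ i)"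
  using assms
proof (induction S rule: finite_induct)
  case empty
  have "(\<chi> i. axis i 1) = (mat 1 :: 'a^'n^'n)"
    by (simp add: vec_eq_iff axis_def mat_def)
  then show ?case by simp
next
  case (insert s S)
  let ?c = "\<lambda>i. if i \<in> S then axis i 1 + x $ i *s y else axis i (1::'a)"
  have "(\<chi> i. if i \<in> insert s S then axis i 1 + x $ i *s y else axis i 1)
      = (\<chi> i. if i = s then axis s 1 + x $ s *s y else ?c i)"
    by (auto simp: vec_eq_iff)
  moreover have "(\<chi> i. if i = s then axis s 1 else ?c i) = (\<chi> i. ?c i)"
    using insert.hyps(2) by (auto simp: vec_eq_iff)
  moreover have "det (\<chi> i. if i = s then y else ?c i) = y $ s"
    using det_row_replaced_rank_one_rows[of S s y x] insert.hyps by simp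
  ultimately show ?case
    using insert by (simp add: det_row_add det_row_mul algebra_simps)
qed

text \<open>For y \<bullet> x = 0 this is a transvection.\<close>

definition transvection :: "'a::comm_ring_1^'n \<Rightarrow> 'a^'n \<Rightarrow> 'a^'n^'n" where
  "transvection x y = mat 1 + (\<chi> i j. x $ i * y $ j)"

lemma det_transvection:
  fixes x y :: "'a::comm_ring_1^'n::finite"
  shows "det (transvection x y) = 1 + (\<Sum>i\<in>UNIV. x $ i * y $ i)"
proof -
  have "transvection x y = (\<chi> i. if i \<in> UNIV then axis i 1 + x $ i *s y else axis i 1)"
    by (simp add: transvection_def vec_eq_iff axis_def mat_def)
  then show ?thesis using det_rank_one_rows[of UNIV x y] by simp
qed

lemma transvection_mult_vec:
  fixes x y z :: "'a::comm_ring_1^'n::finite"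
  shows "transvection x y *v z = z + (\<Sum>j\<in>UNIV. y $ j * z $ j) *s x"
proof -
  have "(\<chi> i j. x $ i * y $ j) *v z = (\<Sum>j\<in>UNIV. y $ j * z $ j) *s x"
    by (simp add: vec_eq_iff matrix_vector_mult_def sum_distrib_left algebra_simps)
  then show ?thesis by (simp add: transvection_def matrix_vector_mult_add_rdistrib)
qed

lemma sum_fun_apply: "sum f A x = (\<Sum>a\<in>A. f a x)"
  by (induction A rule: infinite_finite_induct) auto

lemma continuous_on_plus_fun:
  fixes f g :: "'a::topological_space \<Rightarrow> 'b::topological_monoid_add"
  shows "continuous_on S f \<Longrightarrow> continuous_on S g \<Longrightarrow> continuous_on S (f + g)"
  unfolding plus_fun_def by (rule continuous_on_add)

lemma continuous_on_times_fun:
  fixes f g :: "'a::topological_space \<Rightarrow> 'b::real_normed_algebra"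
  shows "continuous_on S f \<Longrightarrow> continuous_on S g \<Longrightarrow> continuous_on S (f * g)"
  unfolding times_fun_def by (rule continuous_on_mult)

lemma continuous_on_sum_fun:
  fixes f :: "'i \<Rightarrow> 'a::topological_space \<Rightarrow> 'b::topological_comm_monoid_add"
  shows "(\<And>a. a \<in> A \<Longrightarrow> continuous_on S (f a)) \<Longrightarrow> continuous_on S (sum f A)"
  unfolding sum_fun_apply[abs_def] by (rule continuous_on_sum)

lemma continuous_on_mat_1_entry:
  "continuous_on S ((mat 1 :: ('a::topological_space \<Rightarrow> 'b::{real_normed_vector, one})^'n^'n) $ i $ j)"
  by (simp add: mat_def zero_fun_def one_fun_def)

definition continuous_coeffs :: "('t::topological_space \<Rightarrow> real) poly \<Rightarrow> bool" where
  "continuous_coeffs p \<longleftrightarrow> (\<forall>k. continuous_on UNIV (coeff p k))"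

lemma continuous_coeffs_add:
  "continuous_coeffs p \<Longrightarrow> continuous_coeffs q \<Longrightarrow> continuous_coeffs (p + q)"
  unfolding continuous_coeffs_def coeff_add by (blast intro: continuous_on_plus_fun)

lemma continuous_coeffs_sum:
  "(\<And>a. a \<in> A \<Longrightarrow> continuous_coeffs (f a)) \<Longrightarrow> continuous_coeffs (sum f A)"
  unfolding continuous_coeffs_def coeff_sum by (auto intro!: continuous_on_sum_fun)

lemma continuous_coeffs_mult:
  "continuous_coeffs p \<Longrightarrow> continuous_coeffs q \<Longrightarrow> continuous_coeffs (p * q)"
  unfolding continuous_coeffs_def coeff_mult
  by (auto intro!: continuous_on_sum_fun continuous_on_times_fun)

lemma continuous_coeffs_monom: "continuous_on UNIV a \<Longrightarrow> continuous_coeffs (monom a n)"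
  unfolding continuous_coeffs_def by (simp add: zero_fun_def)

lemma continuous_coeffs_mat_1_entry:
  "continuous_coeffs ((mat 1 :: ('t::topological_space \<Rightarrow> real) poly^'n^'n) $ i $ j)"
  unfolding continuous_coeffs_def by (simp add: mat_def coeff_1 zero_fun_def one_fun_def)

lemma SL_CT_mat_1: "SL_CT (mat 1 :: ('t::topological_space \<Rightarrow> real)^'n^'n)"
  unfolding SL_CT_def CT_matrix_def by (simp add: continuous_on_mat_1_entry)

lemma CT_matrix_mult: "CT_matrix A \<Longrightarrow> CT_matrix B \<Longrightarrow> CT_matrix (A ** B)"
  unfolding CT_matrix_def matrix_matrix_mult_def
  by (auto intro!: continuous_on_sum_fun continuous_on_times_fun)

lemma SL_CT_mult: "SL_CT A \<Longrightarrow> SL_CT B \<Longrightarrow> SL_CT (A ** B)"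
  unfolding SL_CT_def by (simp add: CT_matrix_mult det_mul)

lemma eval_mat_mult: "eval_mat (A ** B) x = eval_mat A x ** eval_mat B x"
  by (simp add: eval_mat_def matrix_matrix_mult_def poly_sum vec_eq_iff)

lemma SL_CT_poly_iff:
  "SL_CT_poly B \<longleftrightarrow> (\<forall>i j. continuous_coeffs (B $ i $ j)) \<and> det B = 1"
  by (simp add: SL_CT_poly_def continuous_coeffs_def)

lemma SL_CT_poly_mult:
  assumes "SL_CT_poly A" "SL_CT_poly B"
  shows "SL_CT_poly (A ** B)"
proof - have "(A ** B) $ i $ j = (\<Sum>k\<in>UNIV. A $ i $ k * B $ k $ j)" for i j
    by (simp add: matrix_matrix_mult_def)
  with assms show ?thesis
    unfolding SL_CT_poly_iff by (auto intro!: continuous_coeffs_sum continuous_coeffs_mult simp: det_mul)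
qed

lemma connected_to_identity_mat_1:
  "connected_to_identity (mat 1 :: ('t::topological_space \<Rightarrow> real)^'n^'n)"
  unfolding connected_to_identity_def
proof (intro exI conjI)
  show "SL_CT_poly (mat 1 :: ('t \<Rightarrow> real) poly^'n^'n)"
    by (simp add: SL_CT_poly_iff continuous_coeffs_mat_1_entry)
  show "eval_mat (mat 1) 0 = (mat 1 :: ('t \<Rightarrow> real)^'n^'n)"
    and "eval_mat (mat 1) 1 = (mat 1 :: ('t \<Rightarrow> real)^'n^'n)"
    by (simp_all add: eval_mat_def mat_def vec_eq_iff)
qed

lemma connected_to_identity_mult:
  "connected_to_identity A \<Longrightarrow> connected_to_identity B \<Longrightarrow> connected_to_identity (A ** B)"
  unfolding connected_to_identity_def
  by (metis SL_CT_poly_mult eval_mat_mult matrix_mul_lid)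

lemma SL_CT_transvection:
  fixes x y :: "('t::topological_space \<Rightarrow> real)^'n"
  assumes "\<And>i. continuous_on UNIV (x $ i)" "\<And>i. continuous_on UNIV (y $ i)"
    and "(\<Sum>i\<in>UNIV. x $ i * y $ i) = 0"
  shows "SL_CT (transvection x y)"
proof -
  have "transvection x y $ i $ j = mat 1 $ i $ j + x $ i * y $ j" for i j
    by (simp add: transvection_def)
  then have "continuous_on UNIV (transvection x y $ i $ j)" for i j
    by (simp only:) (intro continuous_on_plus_fun continuous_on_times_fun
        continuous_on_mat_1_entry assms(1,2))
  then show ?thesis
    unfolding SL_CT_def CT_matrix_def using assms(3) by (simp add: det_transvection)
qed

text \<open>The path from the identity is X \<mapsto> transvection (X x) y, which stays in SL_n because
  (X x) \<bullet> y = X (x \<bullet> y) = 0.\<close>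

lemma connected_to_identity_transvection:
  fixes x y :: "('t::topological_space \<Rightarrow> real)^'n"
  assumes "\<And>i. continuous_on UNIV (x $ i)" "\<And>i. continuous_on UNIV (y $ i)"
    and orth: "(\<Sum>i\<in>UNIV. x $ i * y $ i) = 0"
  shows "connected_to_identity (transvection x y)"
  unfolding connected_to_identity_def
proof (intro exI conjI)
  let ?Xx = "(\<chi> i. monom (x $ i) 1) :: ('t \<Rightarrow> real) poly^'n"
  let ?y = "(\<chi> i. monom (y $ i) 0) :: ('t \<Rightarrow> real) poly^'n"
  have "(\<Sum>i\<in>UNIV. ?Xx $ i * ?y $ i) = monom (\<Sum>i\<in>UNIV. x $ i * y $ i) 1"
    by (simp add: mult_monom monom_sum)
  then have "det (transvection ?Xx ?y) = 1"
    using orth by (simp add: det_transvection)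
  moreover have "continuous_coeffs (transvection ?Xx ?y $ i $ j)" for i j
    using assms(1,2) unfolding transvection_def
    by (auto intro!: continuous_coeffs_add continuous_coeffs_mult continuous_coeffs_monom
        continuous_coeffs_mat_1_entry)
  ultimately show "SL_CT_poly (transvection ?Xx ?y)"
    by (simp add: SL_CT_poly_iff)
  show "eval_mat (transvection ?Xx ?y) 0 = mat 1"
    and "eval_mat (transvection ?Xx ?y) 1 = transvection x y"
    by (simp_all add: eval_mat_def transvection_def mat_def vec_eq_iff poly_monom)
qed

definition coord_row :: "('t \<Rightarrow> real^'n) \<Rightarrow> ('t \<Rightarrow> real)^'n" where
  "coord_row F = (\<chi> i. (\<lambda>t. F t $ i))"

lemma coord_row_inner: "(\<Sum>i\<in>UNIV. coord_row F $ i * coord_row G $ i) = (\<lambda>t. F t \<bullet> G t)"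
  by (rule ext) (simp add: sum_fun_apply coord_row_def inner_vec_def)

lemma coord_row_diff: "coord_row (\<lambda>t. F t - G t) = coord_row F - coord_row G"
  by (simp add: coord_row_def vec_eq_iff fun_diff_def)

lemma continuous_on_coord_row: "continuous_on S F \<Longrightarrow> continuous_on S (coord_row F $ i)"
  unfolding coord_row_def by (simp add: continuous_on_component)

definition connected_SL_related :: "('t::topological_space \<Rightarrow> real)^'n \<Rightarrow> ('t \<Rightarrow> real)^'n \<Rightarrow> bool"
  where "connected_SL_related v w \<longleftrightarrow>
    (\<exists>\<alpha>. SL_CT \<alpha> \<and> connected_to_identity \<alpha> \<and> \<alpha> *v v = w)"

lemma connected_SL_related_refl: "connected_SL_related v v"
  unfolding connected_SL_related_def
  using SL_CT_mat_1 connected_to_identity_mat_1 by fastforce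

lemma connected_SL_related_trans:
  assumes "connected_SL_related u v" "connected_SL_related v w"
  shows "connected_SL_related u w"
proof -
  obtain \<alpha> \<beta> where "SL_CT \<alpha>" "connected_to_identity \<alpha>" "\<alpha> *v u = v"
    and "SL_CT \<beta>" "connected_to_identity \<beta>" "\<beta> *v v = w"
    using assms unfolding connected_SL_related_def by blast
  then show ?thesis
    unfolding connected_SL_related_def
    by (intro exI[of _ "\<beta> ** \<alpha>"])
      (simp add: SL_CT_mult connected_to_identity_mult matrix_vector_mul_assoc[symmetric])
qed

lemma connected_SL_related_chain:
  assumes "\<And>k. k < N \<Longrightarrow> connected_SL_related (v k) (v (Suc k))"
  shows "connected_SL_related (v 0) (v N)"
  using assms
  by (induction N) (auto intro: connected_SL_related_refl connected_SL_related_trans)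

lemma connected_SL_related_if_inner_eq_1:
  fixes v w z :: "'t::topological_space \<Rightarrow> real^'n"
  assumes "continuous_on UNIV v" "continuous_on UNIV w" "continuous_on UNIV z"
    and zv: "\<And>t. z t \<bullet> v t = 1" and zw: "\<And>t. z t \<bullet> w t = 1"
  shows "connected_SL_related (coord_row v) (coord_row w)"
proof -
  let ?x = "coord_row (\<lambda>t. w t - v t)" and ?y = "coord_row z"
  have cont: "continuous_on UNIV (?x $ i)" "continuous_on UNIV (?y $ i)" for i
    using assms(1-3) by (auto intro!: continuous_on_coord_row continuous_intros)
  have "(\<Sum>i\<in>UNIV. ?x $ i * ?y $ i) = (\<lambda>t. (w t - v t) \<bullet> z t)"
    by (rule coord_row_inner)
  also have "\<dots> = 0"
  proof -
    have "(w t - v t) \<bullet> z t = 0" for t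
      using zv[of t] zw[of t] by (simp add: inner_diff_left inner_commute[of "z t"])
    then show ?thesis by (simp add: zero_fun_def)
  qed
  finally have orth: "(\<Sum>i\<in>UNIV. ?x $ i * ?y $ i) = 0" .
  have "(\<Sum>j\<in>UNIV. ?y $ j * coord_row v $ j) = 1"
    using zv by (simp add: coord_row_inner one_fun_def)
  then have "transvection ?x ?y *v coord_row v = coord_row w"
    by (simp add: transvection_mult_vec coord_row_diff)
  then show ?thesis
    unfolding connected_SL_related_def
    using SL_CT_transvection[OF cont orth] connected_to_identity_transvection[OF cont orth]
    by blast
qed

lemma inner_gt_minus_1_if_dist_lt_2:
  fixes u w :: "'a::real_inner"
  assumes "norm u = 1" "norm w = 1" "dist u w < 2"
  shows "u \<bullet> w > -1"
proof -
  have "(norm (u - w))\<^sup>2 = 2 - 2 * (u \<bullet> w)"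
    using assms(1,2) unfolding norm_eq_1
    by (simp add: power2_norm_eq_inner inner_diff_left inner_diff_right inner_commute)
  moreover have "(norm (u - w))\<^sup>2 < 2\<^sup>2"
    using assms(3) by (intro power_strict_mono) (simp_all add: dist_norm)
  ultimately show ?thesis by simp
qed

lemma connected_SL_related_unit_fields:
  fixes U W :: "'t::topological_space \<Rightarrow> real^'n"
  assumes cU: "continuous_on UNIV U" and cW: "continuous_on UNIV W"
    and nU: "\<And>t. norm (U t) = 1" and nW: "\<And>t. norm (W t) = 1"
    and d: "\<And>t. dist (U t) (W t) < 2"
  shows "connected_SL_related (coord_row U) (coord_row W)"
proof -
  have UU: "U t \<bullet> U t = 1" and WW: "W t \<bullet> W t = 1" for t
    using nU nW by (simp_all add: norm_eq_1)
  have pos: "1 + U t \<bullet> W t > 0" for t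
    using inner_gt_minus_1_if_dist_lt_2[OF nU nW d, of t] by linarith
  define P where "P t = (1 / (1 + U t \<bullet> W t)) *\<^sub>R (U t + W t)" for t
  have cP: "continuous_on UNIV P"
    unfolding P_def using pos by (intro continuous_intros cU cW) (auto simp: less_le)
  have UP: "U t \<bullet> P t = 1" and WP: "W t \<bullet> P t = 1" for t
    using pos[of t] UU[of t] WW[of t]
    by (simp_all add: P_def inner_add_right inner_commute add.commute)
  show ?thesis
    using connected_SL_related_if_inner_eq_1[OF cU cP cU UU UP]
      connected_SL_related_if_inner_eq_1[OF cP cW cW WP WW]
    by (rule connected_SL_related_trans)
qed

lemma uniform_subdivision:
  fixes H :: "'t::topological_space \<times> real \<Rightarrow> 'b::metric_space"
  assumes "compact (UNIV :: 't set)" "continuous_on (UNIV \<times> {0..1}) H" "e > 0"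
  obtains N :: nat where "N > 0"
    "\<And>k t. k < N \<Longrightarrow> dist (H (t, k / N)) (H (t, Suc k / N)) < e"
proof -
  have cont: "continuous_on ({0..1} \<times> UNIV) (\<lambda>p. H (snd p, fst p))"
    by (rule continuous_on_compose2[OF assms(2)]) (auto intro!: continuous_intros)
  have "\<exists>X. s \<in> X \<and> open X \<and> (\<forall>a\<in>X \<inter> {0..1}. \<forall>t. dist (H (t, a)) (H (t, s)) \<le> e / 3)"
    if s: "s \<in> {0..1}" for s
  proof -
    obtain X where "s \<in> X" "open X"
      "\<forall>a\<in>X \<inter> {0..1}. \<forall>t\<in>UNIV. dist (H (t, a)) (H (t, s)) \<le> e / 3"
      by (rule continuous_on_prod_compactE[OF cont assms(1) s, of "e / 3"])
        (use assms(3) in auto)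
    then show ?thesis by blast
  qed
  then obtain X where X: "\<And>s. s \<in> {0..1} \<Longrightarrow> s \<in> X s \<and> open (X s)"
    "\<And>s a t. s \<in> {0..1} \<Longrightarrow> a \<in> X s \<inter> {0..1} \<Longrightarrow> dist (H (t, a)) (H (t, s)) \<le> e / 3"
    by (metis bchoice)
  obtain \<delta> where "\<delta> > 0" and \<delta>: "\<And>s. s \<in> {0..1} \<Longrightarrow> \<exists>G \<in> X ` {0..1}. ball s \<delta> \<subseteq> G"
    by (rule Heine_Borel_lemma[of "{0..1::real}" "X ` {0..1}"]) (use X(1) in blast)+
  obtain N :: nat where "N > 0" "1 / N < \<delta>"
    using ex_inverse_of_nat_less[OF \<open>\<delta> > 0\<close>] by (auto simp: divide_inverse)
  have "dist (H (t, k / N)) (H (t, Suc k / N)) < e" if "k < N" for k t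
  proof -
    have a: "k / N \<in> {0..1}" and b: "Suc k / N \<in> {0..1}"
      using that by (simp_all add: divide_le_eq_1)
    obtain s where s: "s \<in> {0..1}" "ball (k / N) \<delta> \<subseteq> X s"
      using \<delta>[OF a] by blast
    have "dist (k / N) (Suc k / N) = 1 / N"
      by (simp add: dist_real_def diff_divide_distrib[symmetric])
    then have "k / N \<in> X s \<inter> {0..1}" "Suc k / N \<in> X s \<inter> {0..1}"
      using s \<open>\<delta> > 0\<close> \<open>1 / N < \<delta>\<close> a b by auto
    then have "dist (H (t, k / N)) (H (t, s)) \<le> e / 3" "dist (H (t, Suc k / N)) (H (t, s)) \<le> e / 3"
      using X(2)[OF s(1)] by blast+
    then show ?thesis
      using dist_triangle[of "H (t, k / N)" "H (t, Suc k / N)" "H (t, s)"]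
        dist_commute[of "H (t, s)" "H (t, Suc k / N)"] assms(3) by linarith
  qed
  with \<open>N > 0\<close> show ?thesis by (rule that)
qed

theorem theorem3p5:
  fixes H :: "'t::t2_space \<times> real \<Rightarrow> real^'n"
  assumes "compact (UNIV :: 't set)"
    and "continuous_on (UNIV \<times> {0..1}) H"
    and "H ` (UNIV \<times> {0..1}) \<subseteq> sphere 0 1"
  shows "\<exists>\<alpha> :: ('t \<Rightarrow> real)^'n^'n. SL_CT \<alpha> \<and> connected_to_identity \<alpha> \<and>
           \<alpha> *v (\<chi> i. (\<lambda>t. (H (t, 0)) $ i)) = (\<chi> i. (\<lambda>t. (H (t, 1)) $ i))"
proof -
  obtain N :: nat where "N > 0" and close: "\<And>k t. k < N \<Longrightarrow> dist (H (t, k / N)) (H (t, Suc k / N)) < 2"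
    using uniform_subdivision[OF assms(1,2), of 2] by auto
  have slice: "continuous_on UNIV (\<lambda>t. H (t, s))" "\<And>t. norm (H (t, s)) = 1"
    if "s \<in> {0..1}" for s
    using that assms(3)
    by (auto intro!: continuous_on_compose2[OF assms(2)] continuous_intros simp: subset_iff)
  define v where "v k = coord_row (\<lambda>t. H (t, k / N))" for k :: nat
  have "connected_SL_related (v k) (v (Suc k))" if "k < N" for k
    unfolding v_def using that
    by (intro connected_SL_related_unit_fields slice close) (auto simp: field_simps)
  then have "connected_SL_related (v 0) (v N)"
    by (rule connected_SL_related_chain)
  with \<open>N > 0\<close> show ?thesis
    by (simp add: v_def connected_SL_related_def coord_row_def)
qed

end
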